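(* The $1$-matching complex $M_1(G)$ of any finite fully whiskered graph $G$ is vertex decomposable.
   Context: A fully whiskered graph is a finite simple graph in which every vertex that is not a leaf (degree $\neq 1$) is adjacent to at least one leaf vertex. The $1$-matching complex $M_1(G)$ is the simplicial complex whose simplices are the sets $\sigma\subseteq E(G)$ of pairwise non-adjacent edges (matchings), i.e. every vertex of $G$ is incident to at most one edge of $\sigma$. For a simplicial complex $K$ and a vertex $v$, $\mathrm{lk}(v,K)=\{\tau\in K: v\notin\tau,\ \tau\cup\{v\}\in K\}$ and $\mathrm{del}(v,K)=\{\tau\in K: v\notin\tau\}$. A simplicial complex $K$ is vertex decomposable if $K$ is a simplex (the set of all subsets of a finite set, including $\{\emptyset\}$), or $K$ contains a vertex $v$ such that (i) both $\mathrm{lk}(v,K)$ and $\mathrm{del}(v,K)$ are vertex decomposable, and (ii) every facet (maximal simplex) of $\mathrm{del}(v,K)$ is a facet of $K$. *)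

theory Defs
  imports Main
begin

definition simple_graph :: "'v set \<Rightarrow> 'v set set \<Rightarrow> bool" where
  "simple_graph V E \<longleftrightarrow> finite V \<and> (\<forall>e\<in>E. e \<subseteq> V \<and> card e = 2)"

definition degree :: "'v set set \<Rightarrow> 'v \<Rightarrow> nat" where
  "degree E v = card {e\<in>E. v \<in> e}"

definition is_leaf :: "'v set set \<Rightarrow> 'v \<Rightarrow> bool" where
  "is_leaf E v \<longleftrightarrow> degree E v = 1"

definition adjacent :: "'v set set \<Rightarrow> 'v \<Rightarrow> 'v \<Rightarrow> bool" where
  "adjacent E u v \<longleftrightarrow> {u, v} \<in> E"

definition fully_whiskered :: "'v set \<Rightarrow> 'v set set \<Rightarrow> bool" where
  "fully_whiskered V E \<longleftrightarrow> simple_graph V E \<and>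
     (\<forall>v\<in>V. \<not> is_leaf E v \<longrightarrow> (\<exists>u\<in>V. adjacent E v u \<and> is_leaf E u))"

definition matching_complex :: "'v set \<Rightarrow> 'v set set \<Rightarrow> 'v set set set" where
  "matching_complex V E = {\<sigma>. \<sigma> \<subseteq> E \<and> (\<forall>v\<in>V. card {e\<in>\<sigma>. v \<in> e} \<le> 1)}"

text \<open>Simplicial complexes are represented as sets of faces.\<close>
definition link :: "'a \<Rightarrow> 'a set set \<Rightarrow> 'a set set" where
  "link v K = {\<tau>\<in>K. v \<notin> \<tau> \<and> insert v \<tau> \<in> K}"

definition deletion :: "'a \<Rightarrow> 'a set set \<Rightarrow> 'a set set" where
  "deletion v K = {\<tau>\<in>K. v \<notin> \<tau>}"

definition facet :: "'a set set \<Rightarrow> 'a set \<Rightarrow> bool" where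
  "facet K F \<longleftrightarrow> F \<in> K \<and> (\<forall>G\<in>K. F \<subseteq> G \<longrightarrow> G = F)"

definition is_simplex :: "'a set set \<Rightarrow> bool" where
  "is_simplex K \<longleftrightarrow> (\<exists>S. finite S \<and> K = Pow S)"

inductive vertex_decomposable :: "'a set set \<Rightarrow> bool" where
  simplex: "is_simplex K \<Longrightarrow> vertex_decomposable K"
| shedding: "{v} \<in> K \<Longrightarrow> vertex_decomposable (link v K) \<Longrightarrow>
     vertex_decomposable (deletion v K) \<Longrightarrow>
     (\<forall>F. facet (deletion v K) F \<longrightarrow> facet K F) \<Longrightarrow> vertex_decomposable K"

end

theory Submission
  imports Defs
begin

text \<open>Induction on the number of edges. If no vertex lies on two edges, the matchings are all sets
  of edges, a simplex. Otherwise pick a vertex v on two edges; it carries a pendant edge g = {v, u},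
  and any other edge e through v is a shedding vertex: deleting e or passing to its link (the edges
  disjoint from e) keeps every vertex on two edges equipped with a pendant edge, and a matching
  avoiding e that is maximal among such matchings, but lies in a larger matching containing e,
  avoids v and u and could therefore be extended by g.\<close>

definition matchings :: "'a set set \<Rightarrow> 'a set set set" where
  "matchings E = {\<sigma>. \<sigma> \<subseteq> E \<and> (\<forall>f\<in>\<sigma>. \<forall>f'\<in>\<sigma>. f \<noteq> f' \<longrightarrow> f \<inter> f' = {})}"

definition pendant_edge :: "'a set set \<Rightarrow> 'a \<Rightarrow> 'a set \<Rightarrow> bool" where
  "pendant_edge E w g \<longleftrightarrow> g \<in> E \<and> (\<exists>u. u \<noteq> w \<and> g = {w, u} \<and> (\<forall>h\<in>E. u \<in> h \<longrightarrow> h = g))"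

text \<open>Unlike full whiskeredness, which fails as soon as a vertex becomes isolated, this condition
  survives deleting an edge and passing to a link, as the induction requires.\<close>

definition whiskered :: "'a set set \<Rightarrow> bool" where
  "whiskered E \<longleftrightarrow> finite E \<and>
     (\<forall>w e e'. e \<in> E \<longrightarrow> e' \<in> E \<longrightarrow> e \<noteq> e' \<longrightarrow> w \<in> e \<longrightarrow> w \<in> e' \<longrightarrow> (\<exists>g. pendant_edge E w g))"

lemma pendant_edgeD:
  assumes "pendant_edge E w g"
  shows "g \<in> E" "w \<in> g"
  using assms unfolding pendant_edge_def by auto

lemma pendant_edge_meets:
  assumes "pendant_edge E w g" "f \<in> E" "f \<inter> g \<noteq> {}"
  shows "w \<in> f \<or> f = g"
  using assms unfolding pendant_edge_def by blast

lemma pendant_edge_subset: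
  assumes "pendant_edge E w g" "g \<in> E'" "E' \<subseteq> E"
  shows "pendant_edge E' w g"
  using assms unfolding pendant_edge_def by blast

lemma matchings_disjoint:
  assumes "\<sigma> \<in> matchings E" "f \<in> \<sigma>" "f' \<in> \<sigma>" "f \<noteq> f'"
  shows "f \<inter> f' = {}"
  using assms unfolding matchings_def by blast

lemma insert_matchings:
  assumes "\<sigma> \<in> matchings E" "g \<in> E" "\<And>f. f \<in> \<sigma> \<Longrightarrow> f \<inter> g = {}"
  shows "insert g \<sigma> \<in> matchings E"
  using assms unfolding matchings_def by blast

lemma deletion_matchings: "deletion e (matchings E) = matchings (E - {e})"
  unfolding deletion_def matchings_def by blast

lemma link_matchings:
  assumes "e \<in> E" "e \<noteq> {}"
  shows "link e (matchings E) = matchings {f\<in>E. f \<inter> e = {}}"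
  using assms unfolding link_def matchings_def by (auto 0 4)

lemma whiskered_Diff:
  assumes "whiskered E" and "pendant_edge E v g" "v \<in> e" "e \<noteq> g"
  shows "whiskered (E - {e})"
  unfolding whiskered_def
proof (intro conjI allI impI)
  show "finite (E - {e})" using assms(1) by (simp add: whiskered_def)
  fix w f f' assume "f \<in> E - {e}" "f' \<in> E - {e}" "f \<noteq> f'" "w \<in> f" "w \<in> f'"
  then obtain g' where g': "pendant_edge E w g'" using assms(1) unfolding whiskered_def by blast
  show "\<exists>g. pendant_edge (E - {e}) w g"
  proof (cases "g' = e")
    case False
    then show ?thesis using pendant_edge_subset[OF g', of "E - {e}"] pendant_edgeD[OF g'] by blast
  next
    case True
    then obtain u where "e = {w, u}" "\<forall>h\<in>E. u \<in> h \<longrightarrow> h = e"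
      using g' unfolding pendant_edge_def by blast
    moreover note pendant_edgeD[OF assms(2)]
    ultimately have "v = w" using \<open>v \<in> e\<close> \<open>e \<noteq> g\<close> by blast
    then show ?thesis
      using pendant_edge_subset[OF assms(2), of "E - {e}"] pendant_edgeD[OF assms(2)] assms(4)
      by blast
  qed
qed

lemma whiskered_disjoint_edges:
  assumes "whiskered E" "e \<in> E"
  shows "whiskered {f\<in>E. f \<inter> e = {}}"
  unfolding whiskered_def
proof (intro conjI allI impI)
  show "finite {f\<in>E. f \<inter> e = {}}" using assms(1) by (simp add: whiskered_def)
  fix w f f' assume f: "f \<in> {f\<in>E. f \<inter> e = {}}" "f' \<in> {f\<in>E. f \<inter> e = {}}" "f \<noteq> f'" "w \<in> f" "w \<in> f'"
  then have "f \<in> E" "f' \<in> E" "w \<notin> e" by auto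
  then obtain g where g: "pendant_edge E w g"
    using assms(1) f(3-5) unfolding whiskered_def by blast
  note g_in = pendant_edgeD[OF g]
  then have "g \<inter> e = {}"
    using pendant_edge_meets[OF g assms(2)] \<open>w \<notin> e\<close> by blast
  then show "\<exists>g. pendant_edge {f\<in>E. f \<inter> e = {}} w g"
    using pendant_edge_subset[OF g, of "{f\<in>E. f \<inter> e = {}}"] g_in by blast
qed

lemma facet_deletion_matchings:
  assumes g: "pendant_edge E v g" and "v \<in> e" "e \<noteq> g"
    and F: "facet (deletion e (matchings E)) F"
  shows "facet (matchings E) F"
  unfolding facet_def
proof (intro conjI ballI impI)
  have F_max: "\<And>G. G \<in> deletion e (matchings E) \<Longrightarrow> F \<subseteq> G \<Longrightarrow> G = F"
    and "e \<notin> F" and F_matching: "F \<in> matchings E"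
    using F unfolding facet_def deletion_def by auto
  show "F \<in> matchings E" by (fact F_matching)
  fix G assume G: "G \<in> matchings E" "F \<subseteq> G"
  show "G = F"
  proof (cases "e \<in> G")
    case False
    then show ?thesis using F_max G by (simp add: deletion_def)
  next
    case True
    have v_free: "v \<notin> f" if "f \<in> F" for f
      using matchings_disjoint[OF G(1), of f e] that G(2) True \<open>e \<notin> F\<close> \<open>v \<in> e\<close> by blast
    note g_in = pendant_edgeD[OF g]
    have "F \<subseteq> E" using F_matching unfolding matchings_def by blast
    have "f \<inter> g = {}" if "f \<in> F" for f
      using pendant_edge_meets[OF g, of f] that v_free g_in \<open>F \<subseteq> E\<close> by blast
    then have "insert g F \<in> matchings E" by (rule insert_matchings[OF F_matching g_in(1)])
    then have "insert g F = F"
      using F_max[of "insert g F"] \<open>e \<notin> F\<close> \<open>e \<noteq> g\<close> unfolding deletion_def by blast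
    then show ?thesis using v_free g_in by blast
  qed
qed

lemma matchings_eq_Pow:
  assumes "\<forall>w e e'. e \<in> E \<longrightarrow> e' \<in> E \<longrightarrow> w \<in> e \<longrightarrow> w \<in> e' \<longrightarrow> e = e'"
  shows "matchings E = Pow E"
  using assms unfolding matchings_def by blast

lemma vertex_decomposable_matchings:
  "whiskered E \<Longrightarrow> vertex_decomposable (matchings E)"
proof (induction "card E" arbitrary: E rule: less_induct)
  case less
  have fin: "finite E" using less.prems by (simp add: whiskered_def)
  show ?case
  proof (cases "\<exists>w e e'. e \<in> E \<and> e' \<in> E \<and> e \<noteq> e' \<and> w \<in> e \<and> w \<in> e'")
    case False
    then have "matchings E = Pow E" by (intro matchings_eq_Pow) blast
    then have "is_simplex (matchings E)" unfolding is_simplex_def using fin by blast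
    then show ?thesis by (rule vertex_decomposable.simplex)
  next
    case True
    then obtain v e e' where v: "e \<in> E" "e' \<in> E" "e \<noteq> e'" "v \<in> e" "v \<in> e'" by blast
    then obtain g where g: "pendant_edge E v g"
      using less.prems unfolding whiskered_def by blast
    from v obtain e where e: "e \<in> E" "v \<in> e" "e \<noteq> g" by blast
    show ?thesis
    proof (rule vertex_decomposable.shedding[where v = e])
      show "{e} \<in> matchings E" using e(1) unfolding matchings_def by blast
      have "{f\<in>E. f \<inter> e = {}} \<subset> E" using e(1,2) by blast
      then have "card {f\<in>E. f \<inter> e = {}} < card E" by (rule psubset_card_mono[OF fin])
      moreover have "link e (matchings E) = matchings {f\<in>E. f \<inter> e = {}}"
        using link_matchings[OF e(1)] e(2) by blast
      ultimately show "vertex_decomposable (link e (matchings E))"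
        using less.hyps whiskered_disjoint_edges[OF less.prems e(1)] by simp
      show "vertex_decomposable (deletion e (matchings E))"
        using less.hyps[OF card_Diff1_less[OF fin e(1)]] whiskered_Diff[OF less.prems g e(2,3)]
        by (simp add: deletion_matchings)
      show "\<forall>F. facet (deletion e (matchings E)) F \<longrightarrow> facet (matchings E) F"
        using facet_deletion_matchings[OF g e(2,3)] by blast
    qed
  qed
qed

lemma matching_complex_eq_matchings:
  assumes "finite E" "\<forall>e\<in>E. e \<subseteq> V"
  shows "matching_complex V E = matchings E"
proof -
  have "(\<forall>v\<in>V. card {e\<in>\<sigma>. v \<in> e} \<le> 1) \<longleftrightarrow> (\<forall>f\<in>\<sigma>. \<forall>f'\<in>\<sigma>. f \<noteq> f' \<longrightarrow> f \<inter> f' = {})"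
    if "\<sigma> \<subseteq> E" for \<sigma>
  proof -
    have "finite {e\<in>\<sigma>. v \<in> e}" for v using that assms(1) by (auto intro: finite_subset)
    then show ?thesis using that assms(2) by (auto simp: card_le_Suc0_iff_eq) blast+
  qed
  then show ?thesis unfolding matching_complex_def matchings_def by blast
qed

lemma simple_graph_finite_edges:
  assumes "simple_graph V E"
  shows "finite E"
proof (rule finite_subset)
  show "E \<subseteq> Pow V" using assms unfolding simple_graph_def by blast
  show "finite (Pow V)" using assms unfolding simple_graph_def by simp
qed

lemma fully_whiskered_imp_whiskered:
  assumes fw: "fully_whiskered V E"
  shows "whiskered E"
  unfolding whiskered_def
proof (intro conjI allI impI)
  have sg: "simple_graph V E" using fw unfolding fully_whiskered_def by blast
  then show fin: "finite E" by (rule simple_graph_finite_edges)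
  fix w e e' assume e: "e \<in> E" "e' \<in> E" "e \<noteq> e'" "w \<in> e" "w \<in> e'"
  then have "{e, e'} \<subseteq> {f\<in>E. w \<in> f}" by blast
  then have "2 \<le> degree E w"
    using card_mono[OF _ \<open>{e, e'} \<subseteq> _\<close>] fin \<open>e \<noteq> e'\<close> unfolding degree_def by simp
  then have "\<not> is_leaf E w" by (simp add: is_leaf_def)
  moreover have "w \<in> V" using sg e(1,4) unfolding simple_graph_def by blast
  ultimately obtain u where "adjacent E w u" "is_leaf E u"
    using fw unfolding fully_whiskered_def by blast
  then have wu: "{w, u} \<in> E" and u_leaf: "degree E u = 1"
    unfolding adjacent_def is_leaf_def by simp_all
  from u_leaf obtain g where g: "{f\<in>E. u \<in> f} = {g}"
    unfolding degree_def by (rule card_1_singletonE)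
  have "card {w, u} = 2" using sg wu unfolding simple_graph_def by blast
  then have "u \<noteq> w" by (cases "u = w") simp_all
  moreover have "h = {w, u}" if "h \<in> E" "u \<in> h" for h
  proof -
    have "h \<in> {f\<in>E. u \<in> f}" "{w, u} \<in> {f\<in>E. u \<in> f}" using that wu by simp_all
    then show ?thesis unfolding g by simp
  qed
  ultimately have "pendant_edge E w {w, u}" using wu unfolding pendant_edge_def by blast
  then show "\<exists>g. pendant_edge E w g" ..
qed

theorem corollary3p3:
  fixes V :: "'v set" and E :: "'v set set"
  assumes "fully_whiskered V E"
  shows "vertex_decomposable (matching_complex V E)"
proof -
  have "simple_graph V E" using assms unfolding fully_whiskered_def by blast
  then have "finite E" "\<forall>e\<in>E. e \<subseteq> V"
    using simple_graph_finite_edges unfolding simple_graph_def by blast+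
  then have "matching_complex V E = matchings E" by (rule matching_complex_eq_matchings)
  then show ?thesis
    using vertex_decomposable_matchings[OF fully_whiskered_imp_whiskered[OF assms]] by simp
qed

end
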